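(* Let $G$ be a graph of girth at least $5$ (every cycle of $G$, if any, has length at least $5$), and let $H$ be a maximal co-interval subgraph of $G$ with at least one edge. Then there is an edge $uv\in E(G)$ such that $E(H)=\delta_G(u)\cup\delta_G(v)$, i.e. $H$ is the $(u,v)$-ant of $G$.
   Context: All graphs are finite and simple. $\delta_G(x)$ is the set of edges of $G$ incident to $x$ and $N_G[x]$ the closed neighbourhood. For an edge $uv$, the $(u,v)$-ant of $G$ is the subgraph $(N_G[u]\cup N_G[v],\ \delta_G(u)\cup\delta_G(v))$. A graph is co-interval if its vertices can be assigned closed real intervals such that two distinct vertices are adjacent iff their intervals are disjoint. A co-interval subgraph $H$ of $G$ is maximal if no co-interval subgraph $H'$ of $G$ satisfies $E(H)\subsetneq E(H')$. *)

theory Defs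
  imports Complex_Main
begin

definition graph :: "'a set \<Rightarrow> 'a set set \<Rightarrow> bool" where
  "graph V E \<longleftrightarrow> finite V \<and> (\<forall>e\<in>E. e \<subseteq> V \<and> card e = 2)"

definition subgraph :: "'a set \<Rightarrow> 'a set set \<Rightarrow> 'a set \<Rightarrow> 'a set set \<Rightarrow> bool" where
  "subgraph V' E' V E \<longleftrightarrow> graph V' E' \<and> V' \<subseteq> V \<and> E' \<subseteq> E"

definition incident_edges :: "'a set set \<Rightarrow> 'a \<Rightarrow> 'a set set" where
  "incident_edges E x = {e \<in> E. x \<in> e}"

definition is_cycle :: "'a set \<Rightarrow> 'a set set \<Rightarrow> 'a list \<Rightarrow> bool" where
  "is_cycle V E cs \<longleftrightarrow> length cs \<ge> 3 \<and> distinct cs \<and> set cs \<subseteq> V \<and>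
     (\<forall>i < length cs. {cs ! i, cs ! ((i + 1) mod length cs)} \<in> E)"

definition girth_at_least :: "nat \<Rightarrow> 'a set \<Rightarrow> 'a set set \<Rightarrow> bool" where
  "girth_at_least k V E \<longleftrightarrow> (\<forall>cs. is_cycle V E cs \<longrightarrow> length cs \<ge> k)"

definition co_interval :: "'a set \<Rightarrow> 'a set set \<Rightarrow> bool" where
  "co_interval V E \<longleftrightarrow> (\<exists>l r :: 'a \<Rightarrow> real. (\<forall>x\<in>V. l x \<le> r x) \<and>
     (\<forall>x\<in>V. \<forall>y\<in>V. x \<noteq> y \<longrightarrow> ({x, y} \<in> E \<longleftrightarrow> {l x..r x} \<inter> {l y..r y} = {})))"

definition maximal_co_interval_subgraph ::
  "'a set \<Rightarrow> 'a set set \<Rightarrow> 'a set \<Rightarrow> 'a set set \<Rightarrow> bool" where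
  "maximal_co_interval_subgraph VH EH V E \<longleftrightarrow>
     subgraph VH EH V E \<and> co_interval VH EH \<and>
     \<not> (\<exists>V' E'. subgraph V' E' V E \<and> co_interval V' E' \<and> EH \<subset> E')"

end

theory Submission
  imports Defs
begin

text \<open>Represent the co-interval subgraph \<open>H\<close> by intervals \<open>[l x, r x]\<close>, let \<open>u\<close> have the
  leftmost right end and \<open>v\<close> the rightmost left end. Since \<open>H\<close> has an edge, \<open>[l u, r u]\<close> lies
  strictly left of \<open>[l v, r v]\<close>, so \<open>uv \<in> E(H)\<close>. Any edge \<open>xy\<close> of \<open>H\<close> with \<open>r x < l y\<close> and
  \<open>{x, y} \<inter> {u, v} = {}\<close> would close the 4-cycle \<open>u y x v\<close>, so every edge of \<open>H\<close> meets \<open>u\<close>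
  or \<open>v\<close>: \<open>H\<close> lies inside the \<open>(u,v)\<close>-ant. Conversely every ant is co-interval (\<open>u \<mapsto> [0,0]\<close>,
  \<open>v \<mapsto> [3,3]\<close>, every other vertex gets an interval containing \<open>[1,2]\<close>), so maximality
  forces \<open>H\<close> to be the whole ant.\<close>

lemma graph_edgeD:
  assumes "graph V E" "{a, b} \<in> E"
  shows "a \<noteq> b" "a \<in> V" "b \<in> V"
proof -
  have "{a, b} \<subseteq> V" "card {a, b} = 2" using assms unfolding graph_def by auto
  then show "a \<noteq> b" "a \<in> V" "b \<in> V" by (auto simp: card_insert_if)
qed

lemma graph_edgeE:
  assumes "graph V E" "e \<in> E"
  obtains a b where "a \<noteq> b" "e = {a, b}"
  using assms unfolding graph_def by (meson card_2_iff)

lemma girth_at_least_subgraph: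
  assumes "subgraph V' E' V E" "girth_at_least k V E"
  shows "girth_at_least k V' E'"
  using assms unfolding subgraph_def girth_at_least_def is_cycle_def by blast

lemma girth_at_least_5_no_4_cycle:
  assumes "graph V E" "girth_at_least 5 V E"
    and "{a, b} \<in> E" "{b, c} \<in> E" "{c, d} \<in> E" "{d, a} \<in> E"
    and "distinct [a, b, c, d]"
  shows False
proof -
  have "{[a, b, c, d] ! i, [a, b, c, d] ! ((i + 1) mod 4)} \<in> E" if "i < 4" for i :: nat
  proof -
    have "i = 0 \<or> i = 1 \<or> i = 2 \<or> i = 3" using that by linarith
    then show ?thesis using assms(3-6) by (elim disjE) simp_all
  qed
  moreover have "set [a, b, c, d] \<subseteq> V" using graph_edgeD(2,3)[OF assms(1)] assms(3,5) by simp
  ultimately have "is_cycle V E [a, b, c, d]" using assms(7) unfolding is_cycle_def by simp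
  then show False using assms(2) unfolding girth_at_least_def by fastforce
qed

lemma closed_intervals_disjoint_iff:
  fixes a b c d :: "'a::linorder"
  assumes "a \<le> b" "c \<le> d"
  shows "{a..b} \<inter> {c..d} = {} \<longleftrightarrow> b < c \<or> d < a"
  using assms by auto

lemma co_interval_iff:
  "co_interval V E \<longleftrightarrow> (\<exists>l r :: 'a \<Rightarrow> real. (\<forall>x\<in>V. l x \<le> r x) \<and>
     (\<forall>x\<in>V. \<forall>y\<in>V. x \<noteq> y \<longrightarrow> ({x, y} \<in> E \<longleftrightarrow> r x < l y \<or> r y < l x)))"
proof -
  have "(\<forall>x\<in>V. \<forall>y\<in>V. x \<noteq> y \<longrightarrow> ({x, y} \<in> E \<longleftrightarrow> {l x..r x} \<inter> {l y..r y} = {})) \<longleftrightarrow>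
      (\<forall>x\<in>V. \<forall>y\<in>V. x \<noteq> y \<longrightarrow> ({x, y} \<in> E \<longleftrightarrow> r x < l y \<or> r y < l x))"
    if "\<forall>x\<in>V. l x \<le> r x" for l r :: "'a \<Rightarrow> real"
  proof -
    have "{l x..r x} \<inter> {l y..r y} = {} \<longleftrightarrow> r x < l y \<or> r y < l x" if "x \<in> V" "y \<in> V" for x y
      using \<open>\<forall>x\<in>V. l x \<le> r x\<close> that closed_intervals_disjoint_iff by blast
    then show ?thesis by blast
  qed
  then show ?thesis unfolding co_interval_def by blast
qed

definition closed_neighbourhood :: "'a set set \<Rightarrow> 'a \<Rightarrow> 'a set" where
  "closed_neighbourhood E x = insert x {y. {x, y} \<in> E}"

lemma incident_edge_subset_closed_neighbourhood:
  assumes "graph V E" "e \<in> incident_edges E x"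
  shows "e \<subseteq> closed_neighbourhood E x"
proof -
  have "e \<in> E" "x \<in> e" using assms(2) unfolding incident_edges_def by auto
  then obtain a b where "e = {a, b}" using assms(1) graph_edgeE by metis
  with \<open>e \<in> E\<close> \<open>x \<in> e\<close> show ?thesis
    unfolding closed_neighbourhood_def by (auto simp: insert_commute)
qed

lemma ant_subgraph:
  assumes "graph V E" "{u, v} \<in> E"
  shows "subgraph (closed_neighbourhood E u \<union> closed_neighbourhood E v)
    (incident_edges E u \<union> incident_edges E v) V E"
proof -
  have "closed_neighbourhood E x \<subseteq> V" if "x \<in> {u, v}" for x
    using that graph_edgeD(2,3)[OF assms(1)] assms(2) unfolding closed_neighbourhood_def by blast
  moreover have "incident_edges E u \<union> incident_edges E v \<subseteq> E"
    unfolding incident_edges_def by blast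
  moreover have "e \<subseteq> closed_neighbourhood E u \<union> closed_neighbourhood E v"
    if "e \<in> incident_edges E u \<union> incident_edges E v" for e
    using that incident_edge_subset_closed_neighbourhood[OF assms(1)] by blast
  ultimately show ?thesis
    using assms(1) unfolding subgraph_def graph_def by (auto intro: finite_subset)
qed

lemma ant_co_interval:
  assumes "graph V E" "{u, v} \<in> E"
  shows "co_interval (closed_neighbourhood E u \<union> closed_neighbourhood E v)
    (incident_edges E u \<union> incident_edges E v)"
proof -
  define l :: "'a \<Rightarrow> real" where "l z = (if z = v then 3 else if {u, z} \<in> E then 1 else 0)" for z
  define r :: "'a \<Rightarrow> real" where "r z = (if z = u then 0 else if {v, z} \<in> E then 2 else 3)" for z
  have no_loops: "{z} \<notin> E" for z using graph_edgeD(1)[OF assms(1), of z z] by auto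
  have "u \<noteq> v" using graph_edgeD(1)[OF assms] .
  have "l z \<le> r z" for z using no_loops \<open>u \<noteq> v\<close> unfolding l_def r_def by auto
  moreover have "{x, y} \<in> incident_edges E u \<union> incident_edges E v \<longleftrightarrow> r x < l y \<or> r y < l x"
    if "x \<in> closed_neighbourhood E u \<union> closed_neighbourhood E v"
      "y \<in> closed_neighbourhood E u \<union> closed_neighbourhood E v" "x \<noteq> y" for x y
    using that assms(2) no_loops \<open>u \<noteq> v\<close>
    unfolding l_def r_def incident_edges_def closed_neighbourhood_def
    by (auto simp: insert_commute)
  ultimately show ?thesis unfolding co_interval_iff by blast
qed

lemma co_interval_girth_at_least_5_dominating_edge:
  assumes "graph V E" "co_interval V E" "girth_at_least 5 V E" "E \<noteq> {}"
  obtains u v where "{u, v} \<in> E" "E \<subseteq> incident_edges E u \<union> incident_edges E v"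
proof -
  obtain l r :: "'a \<Rightarrow> real" where lr: "\<And>x. x \<in> V \<Longrightarrow> l x \<le> r x"
    and adj: "\<And>x y. x \<in> V \<Longrightarrow> y \<in> V \<Longrightarrow> x \<noteq> y \<Longrightarrow> {x, y} \<in> E \<longleftrightarrow> r x < l y \<or> r y < l x"
    using assms(2) unfolding co_interval_iff by metis
  obtain a b where "{a, b} \<in> E" using assms(1,4) graph_edgeE by (metis ex_in_conv)
  then have ab: "a \<in> V" "b \<in> V" "a \<noteq> b" using graph_edgeD[OF assms(1)] by auto
  have "finite V" "V \<noteq> {}" using assms(1) ab unfolding graph_def by auto
  then obtain u v where "u \<in> V" "Min (r ` V) = r u" "v \<in> V" "Max (l ` V) = l v"
    by (metis obtains_MIN obtains_MAX)
  with \<open>finite V\<close> have u: "u \<in> V" "\<And>z. z \<in> V \<Longrightarrow> r u \<le> r z"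
    and v: "v \<in> V" "\<And>z. z \<in> V \<Longrightarrow> l z \<le> l v"
    by (metis Min_le Max_ge finite_imageI imageI)+
  obtain x y where "x \<in> V" "y \<in> V" "r x < l y"
    using adj ab \<open>{a, b} \<in> E\<close> by blast
  then have "r u < l v" using u(2)[of x] v(2)[of y] by linarith
  then have "u \<noteq> v" using lr[OF u(1)] by auto
  then have uv: "{u, v} \<in> E" using adj[OF u(1) v(1)] \<open>r u < l v\<close> by blast
  have covered: "u \<in> {x, y} \<or> v \<in> {x, y}" if "x \<in> V" "y \<in> V" "r x < l y" for x y
  proof (rule ccontr)
    assume "\<not> (u \<in> {x, y} \<or> v \<in> {x, y})"
    moreover have "x \<noteq> y" using lr[OF that(1)] that(3) by auto
    ultimately have distinct: "distinct [u, y, x, v]" using \<open>u \<noteq> v\<close> by auto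
    have "r u < l y" using u(2)[OF that(1)] that(3) by linarith
    then have "{u, y} \<in> E" using adj[OF u(1) that(2)] distinct by simp
    moreover have "{y, x} \<in> E" using adj[OF that(2,1)] that(3) distinct by simp
    moreover have "r x < l v" using v(2)[OF that(2)] that(3) by linarith
    then have "{x, v} \<in> E" using adj[OF that(1) v(1)] distinct by simp
    moreover have "{v, u} \<in> E" using uv by (simp add: insert_commute)
    ultimately show False using girth_at_least_5_no_4_cycle[OF assms(1,3)] distinct by blast
  qed
  have "E \<subseteq> incident_edges E u \<union> incident_edges E v"
  proof
    fix e assume "e \<in> E"
    then obtain x y where e: "e = {x, y}" "x \<noteq> y" using graph_edgeE[OF assms(1)] by metis
    with \<open>e \<in> E\<close> have xy: "x \<in> V" "y \<in> V" using graph_edgeD(2,3)[OF assms(1)] by auto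
    have "r x < l y \<or> r y < l x" using adj[OF xy e(2)] \<open>e \<in> E\<close> e(1) by simp
    then have "u \<in> e \<or> v \<in> e" using covered[OF xy] covered[OF xy(2,1)] e(1) by blast
    with \<open>e \<in> E\<close> show "e \<in> incident_edges E u \<union> incident_edges E v"
      unfolding incident_edges_def by blast
  qed
  with uv show ?thesis using that by blast
qed

theorem mainTheorem13:
  fixes V VH :: "'a set" and E EH :: "'a set set"
  assumes "graph V E"
    and "girth_at_least 5 V E"
    and "maximal_co_interval_subgraph VH EH V E"
    and "EH \<noteq> {}"
  shows "\<exists>u v. {u, v} \<in> E \<and> EH = incident_edges E u \<union> incident_edges E v"
proof -
  have H: "subgraph VH EH V E" "co_interval VH EH"
    and maximal: "\<And>V' E'. subgraph V' E' V E \<Longrightarrow> co_interval V' E' \<Longrightarrow> \<not> EH \<subset> E'"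
    using assms(3) unfolding maximal_co_interval_subgraph_def by auto
  have "graph VH EH" "EH \<subseteq> E" using H(1) unfolding subgraph_def by auto
  moreover have "girth_at_least 5 VH EH" using girth_at_least_subgraph[OF H(1) assms(2)] .
  ultimately obtain u v where "{u, v} \<in> EH" "EH \<subseteq> incident_edges EH u \<union> incident_edges EH v"
    using co_interval_girth_at_least_5_dominating_edge[OF _ H(2) _ assms(4)] by metis
  with \<open>EH \<subseteq> E\<close> have uv: "{u, v} \<in> E" and "EH \<subseteq> incident_edges E u \<union> incident_edges E v"
    unfolding incident_edges_def by blast+
  moreover have "\<not> EH \<subset> incident_edges E u \<union> incident_edges E v"
    using maximal[OF ant_subgraph[OF assms(1) uv] ant_co_interval[OF assms(1) uv]] .
  ultimately show ?thesis by blast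
qed

end
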